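(* For fixed positive integers $x$ and $y$, the expected number of edges in the task-dependency graph resulting from the $(x,y)$ edge-addition process on $n$ vertices is $\Theta(n^2)$ as $n\to\infty$, where the constant in the lower bound depends on $(x,y)$.
   Context: A task-dependency graph is a finite directed acyclic graph (no loops, no multiple edges). A vertex is initial if it has in-degree $0$ and terminal if it has out-degree $0$ (an isolated vertex is both). An $(x,y)$ task-dependency graph has exactly $x$ initial and exactly $y$ terminal vertices. The $(x,y)$ edge-addition process on $n$ vertices: start with the empty graph on $\{1,\dots,n\}$ and repeatedly add, uniformly at random, an edge $(a,b)$ with $a<b$ not yet present; if an addition would cause fewer than $x$ initial vertices or fewer than $y$ terminal vertices, it is cancelled. The process halts if the graph after some edge addition is an $(x,y)$ task-dependency graph, or if no more edges can be added; the result is the final graph. *)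

theory Defs
  imports "HOL-Probability.Probability" "HOL-Library.Landau_Symbols"
begin

text \<open>A graph on vertex set {1..n} is a set of directed edges (a,b) with a < b
  (hence acyclic, no loops, no multiple edges).\<close>

definition initial_vertices :: "nat \<Rightarrow> (nat \<times> nat) set \<Rightarrow> nat set" where
  "initial_vertices n G = {v \<in> {1..n}. \<not> (\<exists>a. (a, v) \<in> G)}"

definition terminal_vertices :: "nat \<Rightarrow> (nat \<times> nat) set \<Rightarrow> nat set" where
  "terminal_vertices n G = {v \<in> {1..n}. \<not> (\<exists>b. (v, b) \<in> G)}"

definition is_xy_tdg :: "nat \<Rightarrow> nat \<Rightarrow> nat \<Rightarrow> (nat \<times> nat) set \<Rightarrow> bool" where
  "is_xy_tdg x y n G \<longleftrightarrow>
     card (initial_vertices n G) = x \<and> card (terminal_vertices n G) = y"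

text \<open>Edges whose addition is not cancelled.\<close>
definition addable_edges :: "nat \<Rightarrow> nat \<Rightarrow> nat \<Rightarrow> (nat \<times> nat) set \<Rightarrow> (nat \<times> nat) set" where
  "addable_edges x y n G =
     {(a, b). 1 \<le> a \<and> a < b \<and> b \<le> n \<and> (a, b) \<notin> G \<and>
              card (initial_vertices n (insert (a, b) G)) \<ge> x \<and>
              card (terminal_vertices n (insert (a, b) G)) \<ge> y}"

text \<open>Otherwise a uniformly random non-cancelled edge is added
  (choosing uniformly among all absent edges and discarding cancelled ones gives the
  same distribution of the next actual addition).\<close>
definition process_step :: "nat \<Rightarrow> nat \<Rightarrow> nat \<Rightarrow> (nat \<times> nat) set \<Rightarrow> (nat \<times> nat) set pmf" where
  "process_step x y n G =
     (if (G \<noteq> {} \<and> is_xy_tdg x y n G) \<or> addable_edges x y n G = {} then return_pmf G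
      else map_pmf (\<lambda>e. insert e G) (pmf_of_set (addable_edges x y n G)))"

text \<open>Distribution of the final graph: each non-halted step adds an edge, and there are
  fewer than n*n possible edges, so n*n steps suffice (halted states are fixed).\<close>
definition final_graph :: "nat \<Rightarrow> nat \<Rightarrow> nat \<Rightarrow> (nat \<times> nat) set pmf" where
  "final_graph x y n =
     ((\<lambda>p. bind_pmf p (process_step x y n)) ^^ (n * n)) (return_pmf {})"

definition expected_edges :: "nat \<Rightarrow> nat \<Rightarrow> nat \<Rightarrow> real" where
  "expected_edges x y n = measure_pmf.expectation (final_graph x y n) (\<lambda>G. real (card G))"

end

theory Submission
  imports Defs
begin

text \<open>The final graph has at most n(n-1)/2 edges. Conversely, while the graph has fewer than
  m = n^2 / (64 K) edges, where K is the number of edges among the vertices 1..x+1, all but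
  O((x+y)n + m) absent edges are addable, so each step adds an edge among 1..x+1 with probability
  at most c = 4K/n^2; by optional stopping this happens before m edges are present with probability
  at most c m <= 1/16. Yet the process cannot halt before that: an (x,y) task-dependency graph
  without such an edge would have the x+1 initial vertices 1..x+1, and getting stuck is excluded
  by the abundance of addable edges. Hence at least m edges are present with probability 15/16.\<close>

definition all_edges :: "nat \<Rightarrow> (nat \<times> nat) set" where
  "all_edges n = {(a, b). 1 \<le> a \<and> a < b \<and> b \<le> n}"

lemma all_edges_0 [simp]: "all_edges 0 = {}"
  by (auto simp: all_edges_def)

lemma all_edges_Suc: "all_edges (Suc n) = all_edges n \<union> {1..n} \<times> {Suc n}"
  by (auto simp: all_edges_def)

lemma finite_all_edges [simp]: "finite (all_edges n)"
  by (induction n) (simp_all add: all_edges_Suc)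

lemma card_all_edges: "2 * card (all_edges n) = n * (n - 1)"
proof (induction n)
  case (Suc n)
  have "all_edges n \<inter> {1..n} \<times> {Suc n} = {}"
    by (auto simp: all_edges_def)
  then have "card (all_edges (Suc n)) = card (all_edges n) + n"
    by (simp add: all_edges_Suc card_Un_disjoint card_cartesian_product)
  with Suc.IH show ?case
    by (cases n) simp_all
qed simp

lemma card_all_edges_Suc_pos: "0 < x \<Longrightarrow> 0 < card (all_edges (Suc x))"
  using card_all_edges[of "Suc x"] by simp

lemma initial_vertices_empty: "initial_vertices n {} = {1..n}"
  by (auto simp: initial_vertices_def)

lemma terminal_vertices_empty: "terminal_vertices n {} = {1..n}"
  by (auto simp: terminal_vertices_def)

lemma initial_vertices_insert:
  "initial_vertices n (insert (a, b) G) = initial_vertices n G - {b}"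
  by (auto simp: initial_vertices_def)

lemma terminal_vertices_insert:
  "terminal_vertices n (insert (a, b) G) = terminal_vertices n G - {a}"
  by (auto simp: terminal_vertices_def)

lemma finite_initial_vertices [simp]: "finite (initial_vertices n G)"
  by (simp add: initial_vertices_def)

lemma finite_terminal_vertices [simp]: "finite (terminal_vertices n G)"
  by (simp add: terminal_vertices_def)

lemma initial_vertices_if_disjoint_all_edges:
  assumes "G \<subseteq> all_edges n" "k \<le> n" "G \<inter> all_edges k = {}"
  shows "{1..k} \<subseteq> initial_vertices n G"
  using assms by (fastforce simp: initial_vertices_def all_edges_def)

definition halted :: "nat \<Rightarrow> nat \<Rightarrow> nat \<Rightarrow> (nat \<times> nat) set \<Rightarrow> bool" where
  "halted x y n G \<longleftrightarrow> (G \<noteq> {} \<and> is_xy_tdg x y n G) \<or> addable_edges x y n G = {}"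

definition admissible :: "nat \<Rightarrow> nat \<Rightarrow> nat \<Rightarrow> (nat \<times> nat) set \<Rightarrow> bool" where
  "admissible x y n G \<longleftrightarrow>
     G \<subseteq> all_edges n \<and> x \<le> card (initial_vertices n G) \<and> y \<le> card (terminal_vertices n G)"

lemma admissible_empty: "x \<le> n \<Longrightarrow> y \<le> n \<Longrightarrow> admissible x y n {}"
  by (simp add: admissible_def initial_vertices_empty terminal_vertices_empty)

lemma finite_if_admissible: "admissible x y n G \<Longrightarrow> finite G"
  using finite_subset[of G "all_edges n"] by (simp add: admissible_def)

lemma addable_edges_subset: "addable_edges x y n G \<subseteq> all_edges n - G"
  by (auto simp: addable_edges_def all_edges_def)

lemma finite_addable_edges [simp]: "finite (addable_edges x y n G)"
  by (rule finite_subset[OF addable_edges_subset]) simp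

lemma mem_addable_edges:
  "(a, b) \<in> addable_edges x y n G \<longleftrightarrow>
     (a, b) \<in> all_edges n - G \<and>
     x \<le> card (initial_vertices n G - {b}) \<and> y \<le> card (terminal_vertices n G - {a})"
  by (simp add: addable_edges_def all_edges_def initial_vertices_insert terminal_vertices_insert)

lemma process_step_halted: "halted x y n G \<Longrightarrow> process_step x y n G = return_pmf G"
  unfolding process_step_def halted_def by (rule if_P)

lemma process_step_not_halted:
  "\<not> halted x y n G \<Longrightarrow>
    process_step x y n G = map_pmf (\<lambda>e. insert e G) (pmf_of_set (addable_edges x y n G))"
  unfolding process_step_def halted_def by (rule if_not_P)

lemma set_pmf_process_step:
  "set_pmf (process_step x y n G) =
     (if halted x y n G then {G} else (\<lambda>e. insert e G) ` addable_edges x y n G)"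
  by (auto simp: process_step_def halted_def)

lemma admissible_process_step:
  assumes "admissible x y n G" "G' \<in> set_pmf (process_step x y n G)"
  shows "admissible x y n G'"
proof (cases "halted x y n G")
  case False
  then obtain a b where ab: "(a, b) \<in> addable_edges x y n G" and G': "G' = insert (a, b) G"
    using assms(2) by (auto simp: set_pmf_process_step)
  then show ?thesis
    using assms(1) unfolding mem_addable_edges admissible_def
    by (simp add: initial_vertices_insert terminal_vertices_insert)
qed (use assms in \<open>simp add: set_pmf_process_step\<close>)

lemma subset_all_edges_process_step:
  assumes "G \<subseteq> all_edges n" "G' \<in> set_pmf (process_step x y n G)"
  shows "G' \<subseteq> all_edges n"
  using assms addable_edges_subset[of x y n G] by (auto simp: set_pmf_process_step split: if_splits)

lemma card_process_step:
  assumes "finite G" "\<not> halted x y n G" "G' \<in> set_pmf (process_step x y n G)"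
  shows "card G' = Suc (card G)"
  using assms addable_edges_subset[of x y n G] by (auto simp: set_pmf_process_step)

lemma set_pmf_funpow_bind_subset:
  assumes "set_pmf p \<subseteq> B" "\<And>a. a \<in> B \<Longrightarrow> set_pmf (K a) \<subseteq> B"
  shows "set_pmf (((\<lambda>q. bind_pmf q K) ^^ k) p) \<subseteq> B"
  using assms by (induction k) auto

lemma expectation_funpow_bind_le:
  fixes K :: "'a \<Rightarrow> 'a pmf" and f :: "'a \<Rightarrow> real"
  assumes "finite B" "set_pmf p \<subseteq> B" "\<And>a. a \<in> B \<Longrightarrow> set_pmf (K a) \<subseteq> B"
    and "\<And>a. a \<in> B \<Longrightarrow> measure_pmf.expectation (K a) f \<le> f a"
  shows "measure_pmf.expectation (((\<lambda>q. bind_pmf q K) ^^ k) p) f \<le> measure_pmf.expectation p f"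
proof (induction k)
  case (Suc k)
  let ?q = "((\<lambda>q. bind_pmf q K) ^^ k) p"
  have q: "set_pmf ?q \<subseteq> B"
    using assms(2,3) by (rule set_pmf_funpow_bind_subset)
  have "measure_pmf.expectation (bind_pmf ?q K) f =
      (\<Sum>a\<in>B. pmf ?q a *\<^sub>R measure_pmf.expectation (K a) f)"
    using assms(1,3) q by (intro pmf_expectation_bind) (auto intro: finite_subset)
  also have "\<dots> \<le> (\<Sum>a\<in>B. pmf ?q a *\<^sub>R f a)"
    using assms(4) by (intro sum_mono) (simp add: mult_left_mono)
  also have "\<dots> = measure_pmf.expectation ?q f"
    using assms(1) q by (intro integral_measure_pmf[symmetric]) auto
  finally show ?case
    using Suc.IH by simp
qed simp

definition process_iterate :: "nat \<Rightarrow> nat \<Rightarrow> nat \<Rightarrow> nat \<Rightarrow> (nat \<times> nat) set pmf" where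
  "process_iterate x y n k = ((\<lambda>p. bind_pmf p (process_step x y n)) ^^ k) (return_pmf {})"

lemma final_graph_eq_process_iterate: "final_graph x y n = process_iterate x y n (n * n)"
  by (simp add: final_graph_def process_iterate_def)

lemma set_pmf_process_iterate_subset: "set_pmf (process_iterate x y n k) \<subseteq> Pow (all_edges n)"
  unfolding process_iterate_def
proof (rule set_pmf_funpow_bind_subset)
  fix G
  assume "G \<in> Pow (all_edges n)"
  then show "set_pmf (process_step x y n G) \<subseteq> Pow (all_edges n)"
    using subset_all_edges_process_step by blast
qed simp

lemma admissible_process_iterate:
  assumes "x \<le> n" "y \<le> n" "G \<in> set_pmf (process_iterate x y n k)"
  shows "admissible x y n G"
proof -
  have "set_pmf (process_iterate x y n k) \<subseteq> Collect (admissible x y n)"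
    unfolding process_iterate_def
    using assms(1,2) admissible_empty admissible_process_step
    by (intro set_pmf_funpow_bind_subset) auto
  with assms(3) show ?thesis
    by blast
qed

lemma process_iterate_card_or_halted:
  "G \<in> set_pmf (process_iterate x y n k) \<Longrightarrow> k \<le> card G \<or> halted x y n G"
proof (induction k arbitrary: G)
  case (Suc k)
  then obtain H where H: "H \<in> set_pmf (process_iterate x y n k)"
    and G: "G \<in> set_pmf (process_step x y n H)"
    by (auto simp: process_iterate_def)
  show ?case
  proof (cases "halted x y n H")
    case True
    with G show ?thesis
      by (simp add: set_pmf_process_step)
  next
    case False
    have "H \<subseteq> all_edges n"
      using H set_pmf_process_iterate_subset by blast
    then have "finite H"
      by (rule finite_subset) simp
    from this False G have "card G = Suc (card H)"
      by (rule card_process_step)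
    with Suc.IH[OF H] False show ?thesis
      by simp
  qed
qed (simp add: process_iterate_def)

lemma subset_all_edges_final_graph: "G \<in> set_pmf (final_graph x y n) \<Longrightarrow> G \<subseteq> all_edges n"
  using set_pmf_process_iterate_subset[of x y n "n * n"]
  unfolding final_graph_eq_process_iterate by blast

lemma halted_final_graph:
  assumes "G \<in> set_pmf (final_graph x y n)"
  shows "halted x y n G"
proof (cases "n = 0")
  case True
  then show ?thesis
    using addable_edges_subset[of x y n G] by (simp add: halted_def)
next
  case False
  have "card G \<le> card (all_edges n)"
    using assms by (intro card_mono finite_all_edges subset_all_edges_final_graph)
  also have "\<dots> < n * n"
    using card_all_edges[of n] False by (cases n) auto
  finally have "\<not> n * n \<le> card G"
    by simp
  then show ?thesis
    using assms process_iterate_card_or_halted unfolding final_graph_eq_process_iterate by blast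
qed

lemma admissible_final_graph:
  "x \<le> n \<Longrightarrow> y \<le> n \<Longrightarrow> G \<in> set_pmf (final_graph x y n) \<Longrightarrow> admissible x y n G"
  by (simp add: final_graph_eq_process_iterate admissible_process_iterate)

lemma finite_set_pmf_final_graph: "finite (set_pmf (final_graph x y n))"
  unfolding final_graph_eq_process_iterate
  by (rule finite_subset[OF set_pmf_process_iterate_subset]) simp

lemma card_final_graph_le: "G \<in> set_pmf (final_graph x y n) \<Longrightarrow> card G \<le> n * n"
  using card_mono[OF finite_all_edges subset_all_edges_final_graph] card_all_edges[of n]
  by (metis diff_le_self le_trans mult_le_mono2 mult_2 le_add1)

lemma expected_edges_le: "expected_edges x y n \<le> real n ^ 2"
  unfolding expected_edges_def
proof (rule measure_pmf.integral_le_const)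
  show "integrable (final_graph x y n) (\<lambda>G. real (card G))"
    by (intro integrable_measure_pmf_finite finite_set_pmf_final_graph)
  show "AE G in final_graph x y n. real (card G) \<le> real n ^ 2"
    using card_final_graph_le by (intro AE_pmfI) (simp add: power2_eq_square flip: of_nat_mult)
qed

lemma card_all_edges_le_card_addable_edges:
  assumes "admissible x y n G"
  shows "card (all_edges n) \<le> card (addable_edges x y n G) + card G + (x + y) * n"
proof -
  define I where "I = {b \<in> initial_vertices n G. card (initial_vertices n G) \<le> x}"
  define T where "T = {a \<in> terminal_vertices n G. card (terminal_vertices n G) \<le> y}"
  have card_I: "card I \<le> x"
    by (cases "card (initial_vertices n G) \<le> x") (simp_all add: I_def)
  have card_T: "card T \<le> y"
    by (cases "card (terminal_vertices n G) \<le> y") (simp_all add: T_def)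
  have at_threshold: "b \<in> A \<and> card A \<le> k"
    if "finite A" "k \<le> card A" "card (A - {b}) < k" for A :: "nat set" and b k
    using that by (cases "b \<in> A") auto
  have "all_edges n - G - addable_edges x y n G \<subseteq> {1..n} \<times> I \<union> T \<times> {1..n}"
  proof (rule subsetI)
    fix e
    assume "e \<in> all_edges n - G - addable_edges x y n G"
    then obtain a b where e: "e = (a, b)"
      and ab: "(a, b) \<in> all_edges n" "(a, b) \<notin> G" "(a, b) \<notin> addable_edges x y n G"
      by (cases e) auto
    have "a \<in> {1..n}" "b \<in> {1..n}"
      using ab(1) by (auto simp: all_edges_def)
    from ab have "card (initial_vertices n G - {b}) < x \<or> card (terminal_vertices n G - {a}) < y"
      by (auto simp: mem_addable_edges not_le)
    then show "e \<in> {1..n} \<times> I \<union> T \<times> {1..n}"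
    proof
      assume "card (initial_vertices n G - {b}) < x"
      with assms have "b \<in> I"
        unfolding I_def admissible_def using at_threshold[OF finite_initial_vertices] by blast
      with e \<open>a \<in> {1..n}\<close> show ?thesis
        by simp
    next
      assume "card (terminal_vertices n G - {a}) < y"
      with assms have "a \<in> T"
        unfolding T_def admissible_def using at_threshold[OF finite_terminal_vertices] by blast
      with e \<open>b \<in> {1..n}\<close> show ?thesis
        by simp
    qed
  qed
  then have "all_edges n \<subseteq> addable_edges x y n G \<union> G \<union> ({1..n} \<times> I \<union> T \<times> {1..n})"
    by blast
  moreover have "finite G"
    using assms by (rule finite_if_admissible)
  moreover have "finite I" "finite T"
    by (simp_all add: I_def T_def)
  ultimately have "card (all_edges n) \<le> card (addable_edges x y n G \<union> G \<union> ({1..n} \<times> I \<union> T \<times> {1..n}))"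
    by (intro card_mono) simp_all
  also have "\<dots> \<le> card (addable_edges x y n G) + card G + (card ({1..n} \<times> I) + card (T \<times> {1..n}))"
    by (meson add_mono card_Un_le order_trans)
  also have "card ({1..n} \<times> I) + card (T \<times> {1..n}) \<le> (x + y) * n"
    using card_I card_T by (simp add: card_cartesian_product algebra_simps add_mono)
  finally show ?thesis
    by simp
qed

lemma card_addable_edges_ge:
  assumes "8 * (x + y + 1) \<le> n" "admissible x y n G" "64 * card G \<le> n * n"
  shows "n * n \<le> 4 * card (addable_edges x y n G)"
proof -
  have "card (all_edges n) \<le> card (addable_edges x y n G) + card G + (x + y) * n"
    using assms(2) by (rule card_all_edges_le_card_addable_edges)
  moreover have "2 * card (all_edges n) + n = n * n"
    using card_all_edges[of n] assms(1) by (cases n) auto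
  moreover have "8 * ((x + y) * n) + 8 * n \<le> n * n"
    using mult_le_mono1[OF assms(1), of n] by (simp add: algebra_simps)
  ultimately show ?thesis
    using assms(3) by linarith
qed

text \<open>The indicator of hitting S within the first m edges, minus c times the stopped edge count:
  a supermartingale as long as each step hits S with probability at most c.\<close>

definition hit_potential :: "'a set \<Rightarrow> nat \<Rightarrow> real \<Rightarrow> 'a set \<Rightarrow> real" where
  "hit_potential S m c G = of_bool (G \<inter> S \<noteq> {} \<and> card G \<le> m) - c * real (min (card G) m)"

lemma expectation_insert_uniform_hit_potential_le:
  assumes "finite S" "finite G" "finite A" "A \<noteq> {}" "A \<inter> G = {}" "0 \<le> c"
    and hit: "card G < m \<Longrightarrow> real (card S) \<le> c * real (card A)"
  shows "measure_pmf.expectation (map_pmf (\<lambda>e. insert e G) (pmf_of_set A)) (hit_potential S m c)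
    \<le> hit_potential S m c G"
proof -
  have card_insert: "card (insert e G) = Suc (card G)" if "e \<in> A" for e
  proof -
    have "e \<notin> G"
      using that assms(5) by blast
    with assms(2) show ?thesis
      by simp
  qed
  have "(\<Sum>e\<in>A. hit_potential S m c (insert e G)) \<le> real (card A) * hit_potential S m c G"
  proof (cases "m \<le> card G \<or> G \<inter> S \<noteq> {}")
    case True
    have "hit_potential S m c (insert e G) \<le> hit_potential S m c G" if "e \<in> A" for e
    proof -
      have "of_bool (insert e G \<inter> S \<noteq> {} \<and> Suc (card G) \<le> m)
          \<le> (of_bool (G \<inter> S \<noteq> {} \<and> card G \<le> m) :: real)"
        using True by auto
      moreover have "c * real (min (card G) m) \<le> c * real (min (Suc (card G)) m)"
        using assms(6) by (intro mult_left_mono) auto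
      ultimately show ?thesis
        unfolding hit_potential_def card_insert[OF that] by linarith
    qed
    then have "(\<Sum>e\<in>A. hit_potential S m c (insert e G)) \<le> (\<Sum>e\<in>A. hit_potential S m c G)"
      by (rule sum_mono)
    then show ?thesis
      by simp
  next
    case False
    have "hit_potential S m c (insert e G) = of_bool (e \<in> S) - c * (real (card G) + 1)"
      if "e \<in> A" for e
    proof -
      have "insert e G \<inter> S \<noteq> {} \<longleftrightarrow> e \<in> S" "Suc (card G) \<le> m"
        using False by auto
      then show ?thesis
        by (simp add: hit_potential_def card_insert[OF that])
    qed
    then have "(\<Sum>e\<in>A. hit_potential S m c (insert e G))
        = (\<Sum>e\<in>A. of_bool (e \<in> S)) - real (card A) * c * (real (card G) + 1)"
      by (simp add: sum_subtractf)
    also have "(\<Sum>e\<in>A. of_bool (e \<in> S)) = real (card (A \<inter> S))"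
      using assms(3) by simp
    also have "real (card (A \<inter> S)) \<le> real (card S)"
      using assms(1) by (simp add: card_mono)
    also have "\<dots> \<le> c * real (card A)"
      using hit False by simp
    also have "c * real (card A) - real (card A) * c * (real (card G) + 1)
        = real (card A) * hit_potential S m c G"
      using False by (simp add: hit_potential_def algebra_simps)
    finally show ?thesis
      by simp
  qed
  moreover have "real (card A) > 0"
    using assms(3,4) by (simp add: card_gt_0_iff)
  ultimately show ?thesis
    by (simp add: integral_pmf_of_set[OF assms(4,3)] pos_divide_le_eq mult.commute)
qed

lemma expectation_final_graph_hit_potential_le:
  assumes "x \<le> n" "y \<le> n" "finite S" "0 \<le> c"
    and hit: "\<And>G. admissible x y n G \<Longrightarrow> card G < m \<Longrightarrow>
      real (card S) \<le> c * real (card (addable_edges x y n G))"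
  shows "measure_pmf.expectation (final_graph x y n) (hit_potential S m c) \<le> 0"
proof -
  let ?B = "Collect (admissible x y n)"
  have "measure_pmf.expectation (final_graph x y n) (hit_potential S m c)
      \<le> measure_pmf.expectation (return_pmf {}) (hit_potential S m c)"
    unfolding final_graph_def
  proof (rule expectation_funpow_bind_le[where B = ?B])
    show "finite ?B"
      by (rule finite_subset[of _ "Pow (all_edges n)"]) (auto simp: admissible_def)
    show "set_pmf (return_pmf {}) \<subseteq> ?B"
      using assms(1,2) by (simp add: admissible_empty)
    show "set_pmf (process_step x y n G) \<subseteq> ?B" if "G \<in> ?B" for G
      using that admissible_process_step by blast
    show "measure_pmf.expectation (process_step x y n G) (hit_potential S m c) \<le> hit_potential S m c G"
      if "G \<in> ?B" for G
    proof (cases "halted x y n G")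
      case False
      show ?thesis
        unfolding process_step_not_halted[OF False]
      proof (rule expectation_insert_uniform_hit_potential_le)
        show "finite G"
          using that by (simp add: finite_if_admissible)
        show "addable_edges x y n G \<noteq> {}"
          using False by (simp add: halted_def)
        show "addable_edges x y n G \<inter> G = {}"
          using addable_edges_subset[of x y n G] by blast
        show "real (card S) \<le> c * real (card (addable_edges x y n G))" if "card G < m"
          using hit \<open>G \<in> ?B\<close> that by simp
      qed (use assms(3,4) in simp_all)
    qed (simp add: process_step_halted)
  qed
  then show ?thesis
    by (simp add: hit_potential_def)
qed

lemma card_ge_hit_potential:
  assumes "0 \<le> c" "card G < m \<Longrightarrow> G \<inter> S \<noteq> {}"
  shows "real m - real m * hit_potential S m c G - c * real m ^ 2 \<le> real (card G)"
proof (cases "m \<le> card G")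
  case True
  then show ?thesis
    by (simp add: hit_potential_def power2_eq_square algebra_simps)
next
  case False
  then have "c * real (card G) \<le> c * real m"
    using assms(1) by (simp add: mult_left_mono)
  then have "real m * (c * real (card G)) \<le> real m * (c * real m)"
    by (simp add: mult_left_mono)
  with False assms(2) show ?thesis
    by (simp add: hit_potential_def power2_eq_square algebra_simps)
qed

lemma final_graph_meets_all_edges_Suc:
  assumes "x < n" "G \<in> set_pmf (final_graph x y n)" "addable_edges x y n G \<noteq> {}"
  shows "G \<inter> all_edges (Suc x) \<noteq> {}"
proof
  assume disjoint: "G \<inter> all_edges (Suc x) = {}"
  have "{1..Suc x} \<subseteq> initial_vertices n G"
    using subset_all_edges_final_graph[OF assms(2)] assms(1) disjoint
    by (intro initial_vertices_if_disjoint_all_edges) auto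
  then have "card {1..Suc x} \<le> card (initial_vertices n G)"
    by (rule card_mono[OF finite_initial_vertices])
  then have "Suc x \<le> card (initial_vertices n G)"
    by simp
  moreover have "is_xy_tdg x y n G"
    using halted_final_graph[OF assms(2)] assms(3) by (simp add: halted_def)
  ultimately show False
    by (simp add: is_xy_tdg_def)
qed

lemma expected_edges_ge_hitting_bound:
  assumes "0 < x" "x < n" "y \<le> n" "0 \<le> c"
    and hit: "\<And>G. admissible x y n G \<Longrightarrow> card G < m \<Longrightarrow>
      real (card (all_edges (Suc x))) \<le> c * real (card (addable_edges x y n G))"
  shows "real m - c * real m ^ 2 \<le> expected_edges x y n"
proof -
  let ?S = "all_edges (Suc x)"
  let ?h = "hit_potential ?S m c"
  have integrable: "integrable (final_graph x y n) f" for f :: "_ \<Rightarrow> real"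
    by (intro integrable_measure_pmf_finite finite_set_pmf_final_graph)
  have "0 < card ?S"
    using assms(1) by (rule card_all_edges_Suc_pos)
  have hits: "G \<inter> ?S \<noteq> {}" if "G \<in> set_pmf (final_graph x y n)" "card G < m" for G
  proof -
    have "admissible x y n G"
      using assms(2,3) that(1) by (intro admissible_final_graph) auto
    have "addable_edges x y n G \<noteq> {}"
    proof
      assume "addable_edges x y n G = {}"
      with hit[OF \<open>admissible x y n G\<close> that(2)] \<open>0 < card ?S\<close> show False
        by simp
    qed
    with assms(2) that(1) show ?thesis
      by (rule final_graph_meets_all_edges_Suc)
  qed
  have "measure_pmf.expectation (final_graph x y n) (\<lambda>G. real m - real m * ?h G - c * real m ^ 2)
      \<le> expected_edges x y n"
    unfolding expected_edges_def
  proof (rule integral_mono_AE[OF integrable integrable], rule AE_pmfI)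
    fix G
    assume "G \<in> set_pmf (final_graph x y n)"
    with assms(4) hits show "real m - real m * ?h G - c * real m ^ 2 \<le> real (card G)"
      by (intro card_ge_hit_potential) auto
  qed
  moreover have "measure_pmf.expectation (final_graph x y n) ?h \<le> 0"
    by (rule expectation_final_graph_hit_potential_le[OF _ _ finite_all_edges assms(4) hit])
      (use assms(2,3) in simp_all)
  then have "real m * measure_pmf.expectation (final_graph x y n) ?h \<le> 0"
    by (simp add: mult_nonneg_nonpos)
  ultimately show ?thesis
    using integrable by simp
qed

lemma expected_edges_ge_div:
  assumes "0 < x" "8 * (x + y + 1) \<le> n"
  defines "K \<equiv> card (all_edges (Suc x))"
  shows "real (n * n div (64 * K)) / 2 \<le> expected_edges x y n"
proof -
  define m where "m = n * n div (64 * K)"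
  define c where "c = 4 * real K / real n ^ 2"
  have "0 < K" "0 < n"
    using assms by (simp_all add: card_all_edges_Suc_pos)
  have "64 * K * m \<le> n * n"
    unfolding m_def by (metis div_times_less_eq_dividend mult.commute)
  then have "real (64 * K * m) \<le> real (n * n)"
    by (simp only: of_nat_le_iff)
  then have mK: "64 * real K * real m \<le> real n ^ 2"
    by (simp add: power2_eq_square)
  have hit: "real K \<le> c * real (card (addable_edges x y n G))"
    if "admissible x y n G" "card G < m" for G
  proof -
    have "m \<le> K * m"
      using mult_le_mono1[of 1 K m] \<open>0 < K\<close> by simp
    with that(2) \<open>64 * K * m \<le> n * n\<close> have "64 * card G \<le> n * n"
      by linarith
    with assms(2) that(1) have "n * n \<le> 4 * card (addable_edges x y n G)"
      by (rule card_addable_edges_ge)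
    then have "real n ^ 2 \<le> 4 * real (card (addable_edges x y n G))"
      by (simp add: power2_eq_square flip: of_nat_mult of_nat_le_iff)
    with \<open>0 < n\<close> show ?thesis
      by (simp add: c_def field_simps mult_left_mono)
  qed
  have "c * real m \<le> 1 / 16"
    using mK \<open>0 < n\<close> by (simp add: c_def field_simps)
  then have "c * real m ^ 2 \<le> real m / 16"
    using mult_right_mono[of "c * real m" "1 / 16" "real m"] by (simp add: power2_eq_square mult.assoc)
  moreover have "real m - c * real m ^ 2 \<le> expected_edges x y n"
    using assms(1,2) hit by (intro expected_edges_ge_hitting_bound) (auto simp: c_def K_def)
  ultimately show ?thesis
    by (simp add: m_def)
qed

lemma expected_edges_ge:
  assumes "0 < x" "8 * (x + y + 1) \<le> n"
  shows "real n ^ 2 \<le> 256 * real (card (all_edges (Suc x))) * expected_edges x y n"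
proof -
  define K where "K = card (all_edges (Suc x))"
  define m where "m = n * n div (64 * K)"
  have "0 < K"
    using assms(1) by (simp add: K_def card_all_edges_Suc_pos)
  have "n * n mod (64 * K) < 64 * K"
    using \<open>0 < K\<close> by simp
  then have "n * n < 64 * K * (m + 1)"
    using div_mult_mod_eq[of "n * n" "64 * K"] by (simp add: m_def algebra_simps)
  then have "real (n * n) < real (64 * K * (m + 1))"
    by (simp only: of_nat_less_iff)
  then have "real n ^ 2 < 64 * real K * (real m + 1)"
    by (simp add: power2_eq_square algebra_simps)
  moreover have "128 * K \<le> n * n"
  proof -
    have "8 * Suc x \<le> n"
      using assms(2) by simp
    then have "8 * Suc x * (8 * Suc x) \<le> n * n"
      using mult_le_mono by blast
    with card_all_edges[of "Suc x"] show ?thesis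
      by (simp add: K_def algebra_simps)
  qed
  then have "128 * real K \<le> real n ^ 2"
    by (simp add: power2_eq_square flip: of_nat_mult of_nat_le_iff)
  moreover have "256 * real K * (real m / 2) \<le> 256 * real K * expected_edges x y n"
    using expected_edges_ge_div[OF assms] by (intro mult_left_mono) (simp_all add: K_def m_def)
  ultimately show ?thesis
    unfolding K_def[symmetric] by (simp add: algebra_simps)
qed

theorem mainTheorem15:
  fixes x y :: nat
  assumes "x > 0" and "y > 0"
  shows "(\<lambda>n. expected_edges x y n) \<in> \<Theta>(\<lambda>n. real n ^ 2)"
proof -
  define K where "K = real (card (all_edges (Suc x)))"
  have "0 < K"
    using assms(1) by (simp add: K_def card_all_edges_Suc_pos)
  have "eventually (\<lambda>n. 1 / (256 * K) * norm (real n ^ 2) \<le> norm (expected_edges x y n)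
      \<and> norm (expected_edges x y n) \<le> 1 * norm (real n ^ 2)) at_top"
    using eventually_ge_at_top[of "8 * (x + y + 1)"]
  proof eventually_elim
    case (elim n)
    with assms(1) have lower: "real n ^ 2 \<le> 256 * K * expected_edges x y n"
      unfolding K_def by (rule expected_edges_ge)
    then have "0 \<le> 256 * K * expected_edges x y n"
      by (rule order_trans[OF zero_le_power2])
    with \<open>0 < K\<close> have "0 \<le> expected_edges x y n"
      by (simp add: zero_le_mult_iff)
    with lower \<open>0 < K\<close> expected_edges_le[of x y n] show ?case
      by (simp add: field_simps)
  qed
  then show ?thesis
    by (rule bigthetaI'[rotated 2]) (use \<open>0 < K\<close> in simp_all)
qed

end
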